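(* Let $x\in\mathbb X$, $\alpha>0$ and $x_\alpha\in R_\alpha(Ax)$. Then $$\gamma_x\Big(\tfrac1\alpha\|Ax-Ax_\alpha\|_{\mathbb Y}\Big)\le\|Ax-Ax_\alpha\|_{\mathbb Y}\le4\gamma_x\Big(\tfrac1{4\alpha}\|Ax-Ax_\alpha\|_{\mathbb Y}\Big).$$
   Context: Standing setting: $\mathbb X$ real Banach space, $\tau$ a topology with $(\mathbb X,\tau)$ locally convex Hausdorff; $\mathcal R:\mathbb X\to(-\infty,\infty]$ proper convex with $\tau$-compact sublevel sets; $\mathbb Y$ real Hilbert space; $A:\mathbb X\to\mathbb Y$ linear, $\tau$-to-weak continuous. $R_\alpha(g):=\operatorname{argmin}_{x\in\mathrm{dom}(\mathcal R)}(\frac1{2\alpha}\|g-Ax\|_{\mathbb Y}^2+\mathcal R(x))$, $\varrho_1(z):=\sup\{\beta^{-1}\|Az-Az_\beta\|_{\mathbb Y}:\beta>0,z_\beta\in R_\beta(Az)\}$. For $r\ge0$ let $B_r:=\{z\in\mathbb X:\varrho_1(z)\le r\}$ (nonempty, since it contains the minimizers of $\mathcal R$) and $\gamma_x(r):=\inf_{z\in B_r}\|Ax-Az\|_{\mathbb Y}$. *)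

theory Defs
  imports "HOL-Analysis.Analysis" "HOL-Library.Extended_Real"
begin

definition locally_convex_hausdorff :: "'a::real_vector topology \<Rightarrow> bool" where
  "locally_convex_hausdorff T \<longleftrightarrow>
     topspace T = UNIV \<and> Hausdorff_space T \<and>
     continuous_map (prod_topology T T) T (\<lambda>(x, y). x + y) \<and>
     continuous_map (prod_topology euclideanreal T) T (\<lambda>(c, x). c *\<^sub>R x) \<and>
     (\<forall>U x. openin T U \<and> x \<in> U \<longrightarrow> (\<exists>V. openin T V \<and> convex V \<and> x \<in> V \<and> V \<subseteq> U))"

definition weak_topology :: "'b::real_inner topology" where
  "weak_topology = topology_generated_by {{y. inner y z \<in> U} | z U. open U}"

definition edom :: "('a \<Rightarrow> ereal) \<Rightarrow> 'a set" where
  "edom R = {x. R x \<noteq> \<infinity>}"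

definition proper_convex :: "('a::real_vector \<Rightarrow> ereal) \<Rightarrow> bool" where
  "proper_convex R \<longleftrightarrow> (\<forall>x. R x \<noteq> -\<infinity>) \<and> edom R \<noteq> {} \<and>
     (\<forall>x\<in>edom R. \<forall>y\<in>edom R. \<forall>u::real. 0 < u \<and> u < 1 \<longrightarrow>
        R (u *\<^sub>R x + (1 - u) *\<^sub>R y) \<le> ereal u * R x + ereal (1 - u) * R y)"

definition tikh :: "('a \<Rightarrow> ereal) \<Rightarrow> ('a \<Rightarrow> 'b::real_normed_vector) \<Rightarrow> real \<Rightarrow> 'b \<Rightarrow> 'a set" where
  "tikh R A \<alpha> g = {x \<in> edom R. \<forall>y \<in> edom R.
      ereal (1 / (2 * \<alpha>) * (norm (g - A x))\<^sup>2) + R x \<le> ereal (1 / (2 * \<alpha>) * (norm (g - A y))\<^sup>2) + R y}"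

definition rho1 :: "('a \<Rightarrow> ereal) \<Rightarrow> ('a \<Rightarrow> 'b::real_normed_vector) \<Rightarrow> 'a \<Rightarrow> ereal" where
  "rho1 R A z = Sup {ereal (norm (A z - A zb) / \<beta>) | \<beta> zb. \<beta> > 0 \<and> zb \<in> tikh R A \<beta> (A z)}"

definition Bset :: "('a \<Rightarrow> ereal) \<Rightarrow> ('a \<Rightarrow> 'b::real_normed_vector) \<Rightarrow> real \<Rightarrow> 'a set" where
  "Bset R A r = {z. rho1 R A z \<le> ereal r}"

definition gamma :: "('a \<Rightarrow> ereal) \<Rightarrow> ('a \<Rightarrow> 'b::real_normed_vector) \<Rightarrow> 'a \<Rightarrow> real \<Rightarrow> real" where
  "gamma R A x r = Inf {norm (A x - A z) | z. z \<in> Bset R A r}"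

end

theory Submission
  imports Defs
begin

text \<open>
  The first inequality holds because \<open>x\<^sub>\<alpha>\<close> itself lies in \<open>B\<^sub>r\<close> for
  \<open>r = \<parallel>Ax - Ax\<^sub>\<alpha>\<parallel>/\<alpha>\<close>: by the variational inequality characterising Tikhonov
  minimisers, regularising \<open>Ax\<^sub>\<alpha>\<close> once more with any parameter \<open>\<beta>\<close> moves it by at most
  \<open>\<beta>\<parallel>Ax - Ax\<^sub>\<alpha>\<parallel>/\<alpha>\<close>.
  For the second, let \<open>z \<in> B\<^sub>r\<close> and \<open>z\<^sub>\<alpha> \<in> R\<^sub>\<alpha>(Az)\<close>, which exists since the data term is
  weakly lower semicontinuous and \<open>\<R>\<close> has compact sublevel sets. Then \<open>\<parallel>Az - Az\<^sub>\<alpha>\<parallel> \<le> \<alpha>r\<close>,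
  and \<open>g \<mapsto> AR\<^sub>\<alpha>(g)\<close> is nonexpansive, so \<open>\<parallel>Ax - Ax\<^sub>\<alpha>\<parallel> \<le> 2\<parallel>Ax - Az\<parallel> + \<alpha>r\<close>; with
  \<open>r = \<parallel>Ax - Ax\<^sub>\<alpha>\<parallel>/(4\<alpha>)\<close> this bounds \<open>\<parallel>Ax - Az\<parallel>\<close> below by \<open>\<parallel>Ax - Ax\<^sub>\<alpha>\<parallel>/4\<close>.
  Finally \<open>B\<^sub>r\<close> is nonempty because it contains the minimisers of \<open>\<R>\<close>.
\<close>

lemma le_if_square_le_mult:
  fixes a b :: real
  assumes "0 \<le> b" and "a\<^sup>2 \<le> b * a"
  shows "a \<le> b"
proof (cases "a \<le> 0")
  case False
  then show ?thesis
    using assms(2) by (simp add: power2_eq_square mult_le_cancel_right_pos)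
qed (use assms(1) in simp)

lemma le_if_forall_diff_mult_le:
  fixes a b d :: real
  assumes "0 \<le> b" and le: "\<And>t. 0 < t \<Longrightarrow> t < 1 \<Longrightarrow> a - t * b \<le> d"
  shows "a \<le> d"
proof (rule ccontr)
  assume "\<not> a \<le> d"
  define t where "t = min (1/2) ((a - d) / (2 * (b + 1)))"
  have "0 < t" "t < 1"
    unfolding t_def using \<open>\<not> a \<le> d\<close> \<open>0 \<le> b\<close> by auto
  have "t * b \<le> (a - d) / (2 * (b + 1)) * b"
    unfolding t_def using \<open>0 \<le> b\<close> by (intro mult_right_mono) auto
  also have "\<dots> < a - d"
    using \<open>\<not> a \<le> d\<close> \<open>0 \<le> b\<close> mult_strict_right_mono[of d a "b + 2"]
    by (simp add: field_simps algebra_simps)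
  finally show False
    using le[OF \<open>0 < t\<close> \<open>t < 1\<close>] by simp
qed

lemma power2_norm_diff_scaleR:
  fixes v u :: "'b::real_inner"
  shows "(norm (v - t *\<^sub>R u))\<^sup>2 = (norm v)\<^sup>2 - 2 * t * inner v u + t\<^sup>2 * (norm u)\<^sup>2"
  unfolding power2_norm_eq_inner
  by (simp add: inner_diff_left inner_diff_right inner_commute algebra_simps power2_eq_square)

lemma two_inner_minus_power2_norm_le:
  fixes v u :: "'b::real_inner"
  shows "2 * inner v u - (norm u)\<^sup>2 \<le> (norm v)\<^sup>2"
  using power2_norm_diff_scaleR[of v 1 u] zero_le_power2[of "norm (v - u)"] by simp

definition lower_semicontinuous_map :: "'a topology \<Rightarrow> ('a \<Rightarrow> ereal) \<Rightarrow> bool" where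
  "lower_semicontinuous_map X f \<longleftrightarrow> (\<forall>c::real. openin X {y \<in> topspace X. ereal c < f y})"

lemma closedin_sublevel_if_lower_semicontinuous:
  assumes "lower_semicontinuous_map X f"
  shows "closedin X {y \<in> topspace X. f y \<le> ereal c}"
proof -
  have "{y \<in> topspace X. f y \<le> ereal c} = topspace X - {y \<in> topspace X. ereal c < f y}"
    by auto
  then show ?thesis
    using assms unfolding lower_semicontinuous_map_def by auto
qed

lemma lower_semicontinuous_if_compactin_sublevels:
  assumes "Hausdorff_space X" and "\<And>c. compactin X {y. f y \<le> ereal c}"
  shows "lower_semicontinuous_map X f"
  unfolding lower_semicontinuous_map_def
proof
  fix c
  have "closedin X {y. f y \<le> ereal c}"
    using assms by (rule compactin_imp_closedin)
  moreover have "{y \<in> topspace X. ereal c < f y} = topspace X - {y. f y \<le> ereal c}"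
    by auto
  ultimately show "openin X {y \<in> topspace X. ereal c < f y}"
    by auto
qed

lemma lower_semicontinuous_add_real:
  assumes h: "lower_semicontinuous_map X (\<lambda>y. ereal (h y))"
    and f: "lower_semicontinuous_map X f"
  shows "lower_semicontinuous_map X (\<lambda>y. ereal (h y) + f y)"
  unfolding lower_semicontinuous_map_def
proof
  fix c
  have "{y \<in> topspace X. ereal c < ereal (h y) + f y}
      = (\<Union>q. {y \<in> topspace X. ereal q < ereal (h y)} \<inter> {y \<in> topspace X. ereal (c - q) < f y})"
  proof (intro set_eqI iffI)
    fix y assume "y \<in> {y \<in> topspace X. ereal c < ereal (h y) + f y}"
    then have y: "y \<in> topspace X" and less: "ereal c < ereal (h y) + f y" by auto
    obtain q where "q < h y" and "ereal (c - q) < f y"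
    proof (cases "f y")
      case (real r)
      then show ?thesis
        using less by (intro that[of "(c - r + h y) / 2"]) (simp_all add: field_simps)
    next
      case PInf
      then show ?thesis using that[of "h y - 1"] by simp
    qed (use less in simp)
    then show "y \<in> (\<Union>q. {y \<in> topspace X. ereal q < ereal (h y)} \<inter> {y \<in> topspace X. ereal (c - q) < f y})"
      using y by auto
  next
    fix y assume "y \<in> (\<Union>q. {y \<in> topspace X. ereal q < ereal (h y)} \<inter> {y \<in> topspace X. ereal (c - q) < f y})"
    then obtain q where "y \<in> topspace X" "q < h y" "ereal (c - q) < f y" by auto
    then show "y \<in> {y \<in> topspace X. ereal c < ereal (h y) + f y}"
      by (cases "f y") auto
  qed
  moreover have "openin X ({y \<in> topspace X. ereal q < ereal (h y)} \<inter> {y \<in> topspace X. ereal (c - q) < f y})" for q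
    using h f unfolding lower_semicontinuous_map_def by blast
  ultimately show "openin X {y \<in> topspace X. ereal c < ereal (h y) + f y}"
    by (auto intro!: openin_Union)
qed

lemma has_minimum_if_compactin_sublevels:
  fixes f :: "'a \<Rightarrow> ereal"
  assumes "Hausdorff_space X" and compact: "\<And>c. compactin X {y. f y \<le> ereal c}"
    and "f x0 \<noteq> \<infinity>"
  obtains z where "\<And>y. f z \<le> f y"
proof -
  obtain c0 where c0: "f x0 \<le> ereal c0"
    using \<open>f x0 \<noteq> \<infinity>\<close> by (cases "f x0") auto
  define S where "S c = {y. f y \<le> ereal c}" for c
  define C where "C = {c. c \<le> c0 \<and> S c \<noteq> {}}"
  \<comment> \<open>The nested closed sets \<open>S c\<close>, \<open>c \<in> C\<close>, have the finite intersection property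
    inside the compact set \<open>S c0\<close>; a point of their intersection is a minimiser.\<close>
  have S_mono: "S a \<subseteq> S b" if "a \<le> b" for a b
    using that unfolding S_def by (auto intro: order.trans)
  have "\<forall>K\<in>S ` C. closedin X K"
    unfolding S_def using compactin_imp_closedin[OF \<open>Hausdorff_space X\<close> compact] by blast
  moreover have "S c0 \<inter> \<Inter>F \<noteq> {}" if F: "finite F" "F \<subseteq> S ` C" for F
  proof (cases "F = {}")
    case True
    then show ?thesis using c0 unfolding S_def by auto
  next
    case False
    obtain D where D: "D \<subseteq> C" "finite D" "F = S ` D"
      using finite_subset_image[OF F] by blast
    with False have "D \<noteq> {}" by blast
    with D have "Min D \<in> C" using Min_in by blast
    then have "S (Min D) \<noteq> {}" and "S (Min D) \<subseteq> S c0"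
      using S_mono unfolding C_def by auto
    moreover have "\<forall>K\<in>F. S (Min D) \<subseteq> K"
      using D S_mono by auto
    ultimately show ?thesis by blast
  qed
  moreover have "compactin X (S c0)"
    unfolding S_def by (rule compact)
  ultimately have "S c0 \<inter> \<Inter>(S ` C) \<noteq> {}"
    unfolding compactin_fip by (elim conjE allE[of _ "S ` C"]) auto
  then obtain z where z0: "f z \<le> ereal c0" and zC: "\<And>c. c \<in> C \<Longrightarrow> f z \<le> ereal c"
    unfolding S_def by blast
  have "f z \<le> f y" for y
  proof (rule ereal_le_real)
    fix c assume "f y \<le> ereal c"
    then show "f z \<le> ereal c"
      using zC[of c] order.trans[OF z0, of "ereal c"] unfolding C_def S_def
      by (cases "c \<le> c0") auto
  qed
  then show ?thesis by (rule that)
qed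

lemma openin_weak_topology_inner_preimage:
  assumes "open U"
  shows "openin weak_topology {w. inner w z \<in> U}"
  unfolding weak_topology_def using assms by (intro topology_generated_by_Basis) blast

lemma lower_semicontinuous_scaled_sq_dist:
  fixes A :: "'a \<Rightarrow> 'b::real_inner"
  assumes A: "continuous_map X weak_topology A" and "0 \<le> c"
  shows "lower_semicontinuous_map X (\<lambda>y. ereal (c * (norm (g - A y))\<^sup>2))"
  unfolding lower_semicontinuous_map_def
proof
  fix t
  define W where "W u = {w. inner w u \<in> {s. t < c * (2 * (inner g u - s) - (norm u)\<^sup>2)}}" for u
  \<comment> \<open>The squared norm is the supremum of the weakly continuous affine maps
    \<open>v \<mapsto> 2 (v \<bullet> u) - \<parallel>u\<parallel>\<^sup>2\<close>, attained at \<open>u = v\<close>.\<close>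
  have "{y \<in> topspace X. ereal t < ereal (c * (norm (g - A y))\<^sup>2)} = (\<Union>u. {y \<in> topspace X. A y \<in> W u})"
  proof (intro set_eqI iffI)
    fix y assume "y \<in> {y \<in> topspace X. ereal t < ereal (c * (norm (g - A y))\<^sup>2)}"
    moreover have "2 * (inner g (g - A y) - inner (A y) (g - A y)) - (norm (g - A y))\<^sup>2 = (norm (g - A y))\<^sup>2"
      unfolding power2_norm_eq_inner by (simp add: inner_diff_left)
    ultimately have "y \<in> {y \<in> topspace X. A y \<in> W (g - A y)}"
      unfolding W_def by simp
    then show "y \<in> (\<Union>u. {y \<in> topspace X. A y \<in> W u})" by blast
  next
    fix y assume "y \<in> (\<Union>u. {y \<in> topspace X. A y \<in> W u})"
    then obtain u where "y \<in> topspace X" and "t < c * (2 * inner (g - A y) u - (norm u)\<^sup>2)"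
      unfolding W_def by (auto simp: inner_diff_left)
    moreover have "c * (2 * inner (g - A y) u - (norm u)\<^sup>2) \<le> c * (norm (g - A y))\<^sup>2"
      using two_inner_minus_power2_norm_le \<open>0 \<le> c\<close> by (rule mult_left_mono)
    ultimately show "y \<in> {y \<in> topspace X. ereal t < ereal (c * (norm (g - A y))\<^sup>2)}"
      by simp
  qed
  moreover have "openin weak_topology (W u)" for u
    unfolding W_def
    by (intro openin_weak_topology_inner_preimage open_Collect_less continuous_intros)
  then have "openin X {y \<in> topspace X. A y \<in> W u}" for u
    using openin_continuous_map_preimage[OF A] by blast
  ultimately show "openin X {y \<in> topspace X. ereal t < ereal (c * (norm (g - A y))\<^sup>2)}"
    by (auto intro!: openin_Union)
qed

lemma tikh_nonempty:
  fixes A :: "'a \<Rightarrow> 'b::real_inner"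
  assumes "Hausdorff_space X" and "edom R \<noteq> {}"
    and compact: "\<And>c. compactin X {y. R y \<le> ereal c}"
    and A: "continuous_map X weak_topology A" and "\<alpha> > 0"
  shows "tikh R A \<alpha> g \<noteq> {}"
proof -
  define J where "J y = ereal (1 / (2 * \<alpha>) * (norm (g - A y))\<^sup>2) + R y" for y
  have R_le_J: "R y \<le> J y" for y
    unfolding J_def using \<open>\<alpha> > 0\<close> by (intro ereal_le_add_self2) simp
  have "lower_semicontinuous_map X J"
    unfolding J_def using \<open>\<alpha> > 0\<close>
    by (intro lower_semicontinuous_add_real lower_semicontinuous_scaled_sq_dist A
        lower_semicontinuous_if_compactin_sublevels[OF \<open>Hausdorff_space X\<close> compact]) simp
  then have closed: "closedin X {y \<in> topspace X. J y \<le> ereal c}" for c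
    by (rule closedin_sublevel_if_lower_semicontinuous)
  have compact_J: "compactin X {y. J y \<le> ereal c}" for c
  proof -
    have sub: "{y. J y \<le> ereal c} \<subseteq> {y. R y \<le> ereal c}"
      using R_le_J order.trans by blast
    then have "{y. J y \<le> ereal c} = {y \<in> topspace X. J y \<le> ereal c}"
      using compactin_subset_topspace[OF compact] by blast
    then show ?thesis
      using closed_compactin[OF compact sub] closed by simp
  qed
  obtain x0 where "x0 \<in> edom R"
    using \<open>edom R \<noteq> {}\<close> by blast
  then have "J x0 \<noteq> \<infinity>"
    unfolding J_def edom_def by simp
  then obtain z where z: "\<And>y. J z \<le> J y"
    using has_minimum_if_compactin_sublevels[OF \<open>Hausdorff_space X\<close> compact_J] by blast
  then have "R z \<noteq> \<infinity>"
    using \<open>J x0 \<noteq> \<infinity>\<close> R_le_J[of z] z[of x0] by auto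
  with z show ?thesis
    unfolding tikh_def J_def edom_def by blast
qed

lemma proper_convex_finite:
  assumes "proper_convex R" and "y \<in> edom R"
  shows "R y = ereal (real_of_ereal (R y))"
  using assms unfolding proper_convex_def edom_def by (cases "R y") auto

lemma tikh_subset_edom: "tikh R A \<alpha> g \<subseteq> edom R"
  unfolding tikh_def by blast

lemma tikh_perturbation_ineq:
  fixes R :: "'a::real_vector \<Rightarrow> ereal" and A :: "'a \<Rightarrow> 'b::real_inner"
  assumes R: "proper_convex R" and "linear A" and "\<alpha> > 0"
    and xa: "xa \<in> tikh R A \<alpha> g" and y: "y \<in> edom R" and t: "0 < t" "t < 1"
  shows "inner (g - A xa) (A y - A xa) / \<alpha> - t * ((norm (A y - A xa))\<^sup>2 / (2 * \<alpha>))
    \<le> real_of_ereal (R y) - real_of_ereal (R xa)"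
proof -
  define rx ry where "rx = real_of_ereal (R xa)" and "ry = real_of_ereal (R y)"
  define e v where "e = g - A xa" and "v = A y - A xa"
  define yt where "yt = t *\<^sub>R y + (1 - t) *\<^sub>R xa"
  \<comment> \<open>Compare the Tikhonov functional at \<open>xa\<close> with its value at \<open>yt\<close>, where
    convexity bounds \<open>R yt\<close> and the data term is quadratic in \<open>t\<close>.\<close>
  have xa_dom: "xa \<in> edom R"
    using subsetD[OF tikh_subset_edom xa] .
  have Rxa: "R xa = ereal rx" and Ry: "R y = ereal ry"
    using proper_convex_finite[OF R] xa_dom y unfolding rx_def ry_def by blast+
  have "R yt \<le> ereal t * R y + ereal (1 - t) * R xa"
    using R y xa_dom t unfolding proper_convex_def yt_def by blast
  then have conv: "R yt \<le> ereal (t * ry + (1 - t) * rx)"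
    unfolding Rxa Ry by simp
  then have "yt \<in> edom R"
    unfolding edom_def by auto
  have "A yt = t *\<^sub>R A y + (1 - t) *\<^sub>R A xa"
    unfolding yt_def by (simp only: linear_add[OF \<open>linear A\<close>] linear_scale[OF \<open>linear A\<close>])
  then have "g - A yt = e - t *\<^sub>R v"
    unfolding e_def v_def by (simp add: algebra_simps)
  then have expand: "(norm (g - A yt))\<^sup>2 = (norm e)\<^sup>2 - 2 * t * inner e v + t\<^sup>2 * (norm v)\<^sup>2"
    by (simp add: power2_norm_diff_scaleR)
  have "ereal (1 / (2 * \<alpha>) * (norm e)\<^sup>2) + R xa \<le> ereal (1 / (2 * \<alpha>) * (norm (g - A yt))\<^sup>2) + R yt"
    using xa \<open>yt \<in> edom R\<close> unfolding tikh_def e_def by blast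
  also have "\<dots> \<le> ereal (1 / (2 * \<alpha>) * (norm (g - A yt))\<^sup>2) + ereal (t * ry + (1 - t) * rx)"
    using conv by (rule add_left_mono)
  finally have "(norm e)\<^sup>2 / (2 * \<alpha>) + rx
      \<le> ((norm e)\<^sup>2 - 2 * t * inner e v + t\<^sup>2 * (norm v)\<^sup>2) / (2 * \<alpha>) + (t * ry + (1 - t) * rx)"
    unfolding Rxa expand by simp
  moreover have "((norm e)\<^sup>2 - 2 * t * inner e v + t\<^sup>2 * (norm v)\<^sup>2) / (2 * \<alpha>) + (t * ry + (1 - t) * rx)
      - ((norm e)\<^sup>2 / (2 * \<alpha>) + rx) = t * ((t * (norm v)\<^sup>2 - 2 * inner e v) / (2 * \<alpha>) + (ry - rx))"
    by (simp add: diff_divide_distrib add_divide_distrib algebra_simps power2_eq_square)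
  ultimately have "0 \<le> t * ((t * (norm v)\<^sup>2 - 2 * inner e v) / (2 * \<alpha>) + (ry - rx))"
    by linarith
  then have "0 \<le> (t * (norm v)\<^sup>2 - 2 * inner e v) / (2 * \<alpha>) + (ry - rx)"
    using t by (simp add: zero_le_mult_iff)
  then show ?thesis
    unfolding e_def v_def rx_def ry_def using \<open>\<alpha> > 0\<close> by (simp add: field_simps)
qed

lemma tikh_variational_inequality:
  fixes R :: "'a::real_vector \<Rightarrow> ereal" and A :: "'a \<Rightarrow> 'b::real_inner"
  assumes "proper_convex R" and "linear A" and "\<alpha> > 0"
    and "xa \<in> tikh R A \<alpha> g" and "y \<in> edom R"
  shows "inner (g - A xa) (A y - A xa) / \<alpha> \<le> real_of_ereal (R y) - real_of_ereal (R xa)"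
proof (rule le_if_forall_diff_mult_le)
  show "0 \<le> (norm (A y - A xa))\<^sup>2 / (2 * \<alpha>)"
    using \<open>\<alpha> > 0\<close> by simp
qed (rule tikh_perturbation_ineq[OF assms])

lemma tikh_nonexpansive:
  fixes R :: "'a::real_vector \<Rightarrow> ereal" and A :: "'a \<Rightarrow> 'b::real_inner"
  assumes R: "proper_convex R" and A: "linear A" and "\<alpha> > 0"
    and xa: "xa \<in> tikh R A \<alpha> g1" and za: "za \<in> tikh R A \<alpha> g2"
  shows "norm (A xa - A za) \<le> norm (g1 - g2)"
proof -
  define w where "w = A xa - A za"
  have "inner (g1 - A xa) (A za - A xa) / \<alpha> \<le> real_of_ereal (R za) - real_of_ereal (R xa)"
    using tikh_variational_inequality[OF R A \<open>\<alpha> > 0\<close> xa subsetD[OF tikh_subset_edom za]] .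
  moreover have "inner (g2 - A za) (A xa - A za) / \<alpha> \<le> real_of_ereal (R xa) - real_of_ereal (R za)"
    using tikh_variational_inequality[OF R A \<open>\<alpha> > 0\<close> za subsetD[OF tikh_subset_edom xa]] .
  ultimately have "inner (g1 - A xa) (A za - A xa) / \<alpha> + inner (g2 - A za) (A xa - A za) / \<alpha> \<le> 0"
    by linarith
  then have "inner (g2 - g1) w + (norm w)\<^sup>2 \<le> 0"
    using \<open>\<alpha> > 0\<close> unfolding w_def power2_norm_eq_inner
    by (simp add: add_divide_distrib[symmetric] divide_le_0_iff inner_diff_left inner_diff_right inner_commute)
  then have "(norm w)\<^sup>2 \<le> norm (g1 - g2) * norm w"
    using norm_cauchy_schwarz[of "g1 - g2" w] by (simp add: inner_diff_left)
  then show ?thesis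
    unfolding w_def by (rule le_if_square_le_mult[OF norm_ge_zero])
qed

lemma tikh_of_tikh_dist_le:
  fixes R :: "'a::real_vector \<Rightarrow> ereal" and A :: "'a \<Rightarrow> 'b::real_inner"
  assumes R: "proper_convex R" and A: "linear A" and "\<alpha> > 0" and "\<beta> > 0"
    and xa: "xa \<in> tikh R A \<alpha> g" and zb: "zb \<in> tikh R A \<beta> (A xa)"
  shows "norm (A xa - A zb) / \<beta> \<le> norm (g - A xa) / \<alpha>"
proof -
  define w where "w = A xa - A zb"
  have "inner (g - A xa) (A zb - A xa) / \<alpha> \<le> real_of_ereal (R zb) - real_of_ereal (R xa)"
    using tikh_variational_inequality[OF R A \<open>\<alpha> > 0\<close> xa subsetD[OF tikh_subset_edom zb]] .
  moreover have "inner w w / \<beta> \<le> real_of_ereal (R xa) - real_of_ereal (R zb)"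
    using tikh_variational_inequality[OF R A \<open>\<beta> > 0\<close> zb subsetD[OF tikh_subset_edom xa]]
    unfolding w_def .
  moreover have "inner (g - A xa) (A zb - A xa) = - inner (g - A xa) w"
    unfolding w_def by (simp add: inner_diff_right)
  ultimately have "(norm w)\<^sup>2 / \<beta> \<le> inner (g - A xa) w / \<alpha>"
    unfolding power2_norm_eq_inner by simp
  also have "\<dots> \<le> norm (g - A xa) * norm w / \<alpha>"
    using \<open>\<alpha> > 0\<close> by (simp add: divide_right_mono norm_cauchy_schwarz)
  finally have "(norm w / \<beta>)\<^sup>2 \<le> norm (g - A xa) / \<alpha> * (norm w / \<beta>)"
    using \<open>\<beta> > 0\<close> by (simp add: power2_eq_square field_simps)
  moreover have "0 \<le> norm (g - A xa) / \<alpha>"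
    using \<open>\<alpha> > 0\<close> by simp
  ultimately show ?thesis
    unfolding w_def by (rule le_if_square_le_mult[rotated])
qed

lemma tikh_dist_le_rho1:
  assumes "\<beta> > 0" and "zb \<in> tikh R A \<beta> (A z)"
  shows "ereal (norm (A z - A zb) / \<beta>) \<le> rho1 R A z"
  unfolding rho1_def using assms by (intro Sup_upper) blast

lemma rho1_tikh_le:
  fixes R :: "'a::real_vector \<Rightarrow> ereal" and A :: "'a \<Rightarrow> 'b::real_inner"
  assumes "proper_convex R" and "linear A" and "\<alpha> > 0" and "xa \<in> tikh R A \<alpha> g"
  shows "rho1 R A xa \<le> ereal (norm (g - A xa) / \<alpha>)"
  unfolding rho1_def
proof (rule Sup_least, clarify)
  fix \<beta> zb assume "\<beta> > 0" and "zb \<in> tikh R A \<beta> (A xa)"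
  then show "ereal (norm (A xa - A zb) / \<beta>) \<le> ereal (norm (g - A xa) / \<alpha>)"
    using tikh_of_tikh_dist_le[OF assms(1-3) _ assms(4)] by simp
qed

lemma rho1_le_zero_if_minimizer:
  assumes R: "proper_convex R" and min: "\<And>y. R z \<le> R y"
  shows "rho1 R A z \<le> 0"
  unfolding rho1_def
proof (rule Sup_least, clarify)
  fix \<beta> zb assume "\<beta> > 0" and zb: "zb \<in> tikh R A \<beta> (A z)"
  obtain x0 where "x0 \<in> edom R"
    using R unfolding proper_convex_def by blast
  then have "z \<in> edom R"
    using min[of x0] unfolding edom_def by auto
  then have "ereal (1 / (2 * \<beta>) * (norm (A z - A zb))\<^sup>2) + R zb \<le> ereal 0 + R z"
    using zb unfolding tikh_def by auto
  also have "\<dots> \<le> ereal 0 + R zb"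
    using min by simp
  finally have "1 / (2 * \<beta>) * (norm (A z - A zb))\<^sup>2 \<le> 0"
    by (subst (asm) (1 2) proper_convex_finite[OF R subsetD[OF tikh_subset_edom zb]]) simp
  then show "ereal (norm (A z - A zb) / \<beta>) \<le> 0"
    using \<open>\<beta> > 0\<close> by (simp add: divide_le_0_iff)
qed

lemma Bset_nonempty:
  assumes X: "Hausdorff_space X" and R: "proper_convex R"
    and compact: "\<And>c. compactin X {y. R y \<le> ereal c}" and "0 \<le> r"
  shows "Bset R A r \<noteq> {}"
proof -
  obtain x0 where "R x0 \<noteq> \<infinity>"
    using R unfolding proper_convex_def edom_def by blast
  then obtain z0 where "\<And>y. R z0 \<le> R y"
    using has_minimum_if_compactin_sublevels[OF X compact] by blast
  then have "rho1 R A z0 \<le> 0"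
    by (rule rho1_le_zero_if_minimizer[OF R])
  then have "z0 \<in> Bset R A r"
    using \<open>0 \<le> r\<close> unfolding Bset_def by (simp add: order_trans[of _ 0])
  then show ?thesis by blast
qed

lemma gamma_le:
  assumes "z \<in> Bset R A r"
  shows "gamma R A x r \<le> norm (A x - A z)"
  unfolding gamma_def using assms by (intro cInf_lower bdd_belowI[of _ 0]) auto

lemma gamma_ge:
  assumes "Bset R A r \<noteq> {}" and "\<And>z. z \<in> Bset R A r \<Longrightarrow> m \<le> norm (A x - A z)"
  shows "m \<le> gamma R A x r"
  unfolding gamma_def using assms by (intro cInf_greatest) auto

lemma tikh_dist_le_dist_Bset:
  fixes R :: "'a::real_vector \<Rightarrow> ereal" and A :: "'a \<Rightarrow> 'b::real_inner"
  assumes R: "proper_convex R" and A: "linear A" and "\<alpha> > 0"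
    and xa: "xa \<in> tikh R A \<alpha> (A x)" and z: "z \<in> Bset R A r" and "tikh R A \<alpha> (A z) \<noteq> {}"
  shows "norm (A x - A xa) \<le> 2 * norm (A x - A z) + \<alpha> * r"
proof -
  obtain za where za: "za \<in> tikh R A \<alpha> (A z)"
    using \<open>tikh R A \<alpha> (A z) \<noteq> {}\<close> by blast
  have "ereal (norm (A z - A za) / \<alpha>) \<le> ereal r"
    using order_trans[OF tikh_dist_le_rho1[OF \<open>\<alpha> > 0\<close> za]] z unfolding Bset_def by blast
  then have "norm (A z - A za) \<le> \<alpha> * r"
    using \<open>\<alpha> > 0\<close> by (simp add: field_simps)
  moreover have "norm (A xa - A za) \<le> norm (A x - A z)"
    using tikh_nonexpansive[OF R A \<open>\<alpha> > 0\<close> xa za] .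
  moreover have "norm (A x - A xa) \<le> norm (A x - A z) + norm (A z - A za) + norm (A za - A xa)"
    using norm_diff_triangle_le[OF norm_diff_triangle_le order_refl] by blast
  ultimately show ?thesis
    by (simp add: norm_minus_commute)
qed

theorem proposition4p8:
  fixes \<tau> :: "'a::banach topology"
    and R :: "'a \<Rightarrow> ereal"
    and A :: "'a \<Rightarrow> 'b::{real_inner, complete_space}"
    and x xa :: 'a and \<alpha> :: real
  assumes "locally_convex_hausdorff \<tau>"
    and "proper_convex R"
    and "\<And>c::real. compactin \<tau> {z. R z \<le> ereal c}"
    and "linear A"
    and "continuous_map \<tau> weak_topology A"
    and "\<alpha> > 0"
    and "xa \<in> tikh R A \<alpha> (A x)"
  shows "gamma R A x (norm (A x - A xa) / \<alpha>) \<le> norm (A x - A xa)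
       \<and> norm (A x - A xa) \<le> 4 * gamma R A x (norm (A x - A xa) / (4 * \<alpha>))"
proof
  define d where "d = norm (A x - A xa)"
  have "0 \<le> d"
    unfolding d_def by simp
  have "rho1 R A xa \<le> ereal (d / \<alpha>)"
    unfolding d_def using rho1_tikh_le assms(2,4,6,7) .
  then show "gamma R A x (d / \<alpha>) \<le> d"
    unfolding d_def by (intro gamma_le) (simp add: Bset_def)
  have Hausdorff: "Hausdorff_space \<tau>"
    using assms(1) unfolding locally_convex_hausdorff_def by blast
  have "edom R \<noteq> {}"
    using assms(2) unfolding proper_convex_def by blast
  have "Bset R A (d / (4 * \<alpha>)) \<noteq> {}"
    using \<open>0 \<le> d\<close> assms(6) by (intro Bset_nonempty[OF Hausdorff assms(2,3)]) simp
  moreover have "d / 4 \<le> norm (A x - A z)" if "z \<in> Bset R A (d / (4 * \<alpha>))" for z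
  proof -
    have "d \<le> 2 * norm (A x - A z) + \<alpha> * (d / (4 * \<alpha>))"
      unfolding d_def
      using tikh_dist_le_dist_Bset[OF assms(2,4,6,7) that[unfolded d_def]
          tikh_nonempty[OF Hausdorff \<open>edom R \<noteq> {}\<close> assms(3,5,6)]] .
    then show ?thesis
      using assms(6) \<open>0 \<le> d\<close> norm_ge_zero[of "A x - A z"] by simp
  qed
  ultimately have "d / 4 \<le> gamma R A x (d / (4 * \<alpha>))"
    by (intro gamma_ge) auto
  then show "d \<le> 4 * gamma R A x (d / (4 * \<alpha>))"
    by simp
qed

end
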